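(* Let $k\ge 1$ be an integer and let $G=K_{n_1,n_2,\dots,n_p}$ ($p\ge 2$) be a complete $p$-partite graph such that $|\{i : n_i\ge k\}|\ge 2$. Then $\Gamma_{\times k,t}(G)=2k$.
   Context: A set $S\subseteq V(G)$ is a $k$-tuple total dominating set ($k$TDS) of a graph $G$ with $\delta(G)\ge k$ if $|N_G(x)\cap S|\ge k$ for every $x\in V(G)$. The upper $k$-tuple total domination number $\Gamma_{\times k,t}(G)$ is the maximum cardinality of a minimal (with respect to inclusion) $k$TDS of $G$. $K_{n_1,\dots,n_p}$ denotes the complete $p$-partite graph with parts of sizes $n_1,\dots,n_p$. *)

theory Defs
  imports Main
begin

text \<open>A (simple) graph is given by a vertex set V and a symmetric irreflexive
adjacency relation E. Open neighbourhood of x:\<close>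
definition nbhd :: "'a set \<Rightarrow> ('a \<Rightarrow> 'a \<Rightarrow> bool) \<Rightarrow> 'a \<Rightarrow> 'a set" where
  "nbhd V E x = {y \<in> V. E x y}"

definition min_degree :: "'a set \<Rightarrow> ('a \<Rightarrow> 'a \<Rightarrow> bool) \<Rightarrow> nat" where
  "min_degree V E = Min ((\<lambda>x. card (nbhd V E x)) ` V)"

definition is_kTDS :: "'a set \<Rightarrow> ('a \<Rightarrow> 'a \<Rightarrow> bool) \<Rightarrow> nat \<Rightarrow> 'a set \<Rightarrow> bool" where
  "is_kTDS V E k S \<longleftrightarrow> S \<subseteq> V \<and> (\<forall>x\<in>V. card (nbhd V E x \<inter> S) \<ge> k)"

definition is_minimal_kTDS :: "'a set \<Rightarrow> ('a \<Rightarrow> 'a \<Rightarrow> bool) \<Rightarrow> nat \<Rightarrow> 'a set \<Rightarrow> bool" where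
  "is_minimal_kTDS V E k S \<longleftrightarrow> is_kTDS V E k S \<and> (\<forall>T. T \<subset> S \<longrightarrow> \<not> is_kTDS V E k T)"

text \<open>Upper k-tuple total domination number (for finite graphs with min degree \<ge> k).\<close>
definition upper_ktuple_tdom :: "'a set \<Rightarrow> ('a \<Rightarrow> 'a \<Rightarrow> bool) \<Rightarrow> nat \<Rightarrow> nat" where
  "upper_ktuple_tdom V E k = Max (card ` {S. is_minimal_kTDS V E k S})"

text \<open>Complete p-partite graph K_{n 0, ..., n (p-1)}: vertex (i,j) is the j-th vertex
of part i; two vertices are adjacent iff they lie in different parts.\<close>
definition cmp_vertices :: "nat \<Rightarrow> (nat \<Rightarrow> nat) \<Rightarrow> (nat \<times> nat) set" where
  "cmp_vertices p n = {(i, j). i < p \<and> j < n i}"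

definition cmp_adj :: "nat \<times> nat \<Rightarrow> nat \<times> nat \<Rightarrow> bool" where
  "cmp_adj u v \<longleftrightarrow> fst u \<noteq> fst v"

end

theory Submission
  imports Defs
begin

text \<open>A vertex x of a complete multipartite graph sees exactly the vertices outside its part,
so S is a k-tuple total dominating set iff no part containing a vertex holds more than |S| - k
elements of S. If S is minimal, removing any v \<in> S breaks this at some x outside the part of v,
so the part P of x holds exactly |S| - k elements of S. If |S| > k, doing the same for some
w \<in> S \<inter> P gives a part P' \<noteq> P with |S \<inter> P'| = |S| - k \<le> |S - P| = k; hence |S| \<le> 2k.
Conversely, k vertices from each of two parts of size at least k form a minimal set of size 2k.\<close>

lemma nbhd_cmp_adj_Int:
  assumes "S \<subseteq> V"
  shows "nbhd V cmp_adj x \<inter> S = {y \<in> S. fst y \<noteq> fst x}"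
  using assms by (auto simp: nbhd_def cmp_adj_def)

lemma is_kTDS_cmp_adj_iff:
  "is_kTDS V cmp_adj k S \<longleftrightarrow> S \<subseteq> V \<and> (\<forall>x\<in>V. k \<le> card {y \<in> S. fst y \<noteq> fst x})"
  by (auto simp: is_kTDS_def nbhd_cmp_adj_Int)

lemma card_eq_same_part_plus_other_parts:
  assumes "finite S"
  shows "card S = card {y \<in> S. fst y = i} + card {y \<in> S. fst y \<noteq> i}"
proof -
  have "S \<inter> {y. fst y = i} = {y \<in> S. fst y = i}" "S - {y. fst y = i} = {y \<in> S. fst y \<noteq> i}"
    by auto
  then show ?thesis
    using card_Int_Diff[OF assms, of "{y. fst y = i}"] by simp
qed

lemma minimal_kTDS_tight_vertex:
  assumes "finite V" and min: "is_minimal_kTDS V cmp_adj k S" and "v \<in> S"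
  obtains x where "x \<in> V" "fst x \<noteq> fst v" "card {y \<in> S. fst y \<noteq> fst x} = k"
proof -
  have SV: "S \<subseteq> V" and dom: "\<forall>x\<in>V. k \<le> card {y \<in> S. fst y \<noteq> fst x}"
    using min by (auto simp: is_minimal_kTDS_def is_kTDS_cmp_adj_iff)
  have "finite S"
    using SV \<open>finite V\<close> finite_subset by blast
  have "\<not> is_kTDS V cmp_adj k (S - {v})"
    using min \<open>v \<in> S\<close> unfolding is_minimal_kTDS_def by blast
  then obtain x where "x \<in> V" and broken: "card {y \<in> S - {v}. fst y \<noteq> fst x} < k"
    using SV by (auto simp: is_kTDS_cmp_adj_iff not_le)
  have removed: "{y \<in> S - {v}. fst y \<noteq> fst x} = {y \<in> S. fst y \<noteq> fst x} - {v}"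
    by auto
  have "fst x \<noteq> fst v"
  proof
    assume "fst x = fst v"
    then have "{y \<in> S. fst y \<noteq> fst x} - {v} = {y \<in> S. fst y \<noteq> fst x}"
      by auto
    then show False
      using broken dom \<open>x \<in> V\<close> removed by fastforce
  qed
  then have "card {y \<in> S - {v}. fst y \<noteq> fst x} = card {y \<in> S. fst y \<noteq> fst x} - 1"
    unfolding removed using \<open>finite S\<close> \<open>v \<in> S\<close> by (simp add: card_Diff_singleton)
  then have "card {y \<in> S. fst y \<noteq> fst x} = k"
    using broken dom \<open>x \<in> V\<close> by fastforce
  with \<open>x \<in> V\<close> \<open>fst x \<noteq> fst v\<close> show thesis
    by (rule that)
qed

lemma card_minimal_kTDS_le:
  assumes "finite V" and min: "is_minimal_kTDS V cmp_adj k S"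
  shows "card S \<le> 2 * k"
proof (cases "S = {}")
  case False
  then obtain v where "v \<in> S"
    by blast
  have "S \<subseteq> V"
    using min by (simp add: is_minimal_kTDS_def is_kTDS_def)
  then have "finite S"
    using \<open>finite V\<close> finite_subset by blast
  obtain x where "x \<in> V" "fst x \<noteq> fst v" and tight_x: "card {y \<in> S. fst y \<noteq> fst x} = k"
    using minimal_kTDS_tight_vertex[OF \<open>finite V\<close> min \<open>v \<in> S\<close>] .
  have card_S: "card S = card {y \<in> S. fst y = fst x} + k"
    using card_eq_same_part_plus_other_parts[OF \<open>finite S\<close>, of "fst x"] tight_x by simp
  show ?thesis
  proof (cases "{y \<in> S. fst y = fst x} = {}")
    case False
    then obtain w where "w \<in> S" "fst w = fst x"
      by blast
    obtain x' where "x' \<in> V" "fst x' \<noteq> fst w" and tight_x': "card {y \<in> S. fst y \<noteq> fst x'} = k"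
      using minimal_kTDS_tight_vertex[OF \<open>finite V\<close> min \<open>w \<in> S\<close>] .
    have "card S = card {y \<in> S. fst y = fst x'} + k"
      using card_eq_same_part_plus_other_parts[OF \<open>finite S\<close>, of "fst x'"] tight_x' by simp
    moreover have "{y \<in> S. fst y = fst x'} \<subseteq> {y \<in> S. fst y \<noteq> fst x}"
      using \<open>fst w = fst x\<close> \<open>fst x' \<noteq> fst w\<close> by auto
    then have "card {y \<in> S. fst y = fst x'} \<le> k"
      using card_mono[of "{y \<in> S. fst y \<noteq> fst x}"] \<open>finite S\<close> tight_x by fastforce
    ultimately show ?thesis
      using card_S by linarith
  next
    case True
    show ?thesis
      using card_S unfolding True by simp
  qed
qed simp

text \<open>Any vertex of B witnesses the failure: its neighbours in T lie in A - {v}.\<close>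

lemma two_blocks_subset_not_kTDS:
  assumes "B \<subseteq> V" "card A = k" "card B = k" "1 \<le> k"
    and "\<forall>y\<in>A. fst y = a" "\<forall>y\<in>B. fst y = b" "a \<noteq> b"
    and "T \<subseteq> A \<union> B" "v \<in> A" "v \<notin> T"
  shows "\<not> is_kTDS V cmp_adj k T"
proof
  assume T: "is_kTDS V cmp_adj k T"
  have "0 < card A" "0 < card B"
    using \<open>card A = k\<close> \<open>card B = k\<close> \<open>1 \<le> k\<close> by simp_all
  then have "finite A" "B \<noteq> {}"
    by (auto intro: card_ge_0_finite)
  then obtain x where "x \<in> B"
    by blast
  have "{y \<in> T. fst y \<noteq> fst x} \<subseteq> A - {v}"
    using assms \<open>x \<in> B\<close> by auto
  then have "card {y \<in> T. fst y \<noteq> fst x} \<le> card (A - {v})"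
    using \<open>finite A\<close> by (intro card_mono) auto
  also have "\<dots> < k"
    using card_Diff1_less[OF \<open>finite A\<close> \<open>v \<in> A\<close>] \<open>card A = k\<close> by simp
  finally have "card {y \<in> T. fst y \<noteq> fst x} < k" .
  moreover have "x \<in> V"
    using \<open>x \<in> B\<close> \<open>B \<subseteq> V\<close> by blast
  ultimately show False
    using T by (auto simp: is_kTDS_cmp_adj_iff not_le)
qed

lemma two_blocks_minimal_kTDS:
  assumes "A \<subseteq> V" "B \<subseteq> V" "card A = k" "card B = k" "1 \<le> k"
    and "\<forall>y\<in>A. fst y = a" "\<forall>y\<in>B. fst y = b" "a \<noteq> b"
  shows "is_minimal_kTDS V cmp_adj k (A \<union> B)"
  unfolding is_minimal_kTDS_def
proof (intro conjI allI impI)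
  have "finite (A \<union> B)"
    using assms(3-5) by (simp add: card_ge_0_finite)
  have "k \<le> card {y \<in> A \<union> B. fst y \<noteq> fst x}" for x
  proof -
    have "(if fst x = a then B else A) \<subseteq> {y \<in> A \<union> B. fst y \<noteq> fst x}"
      using assms by auto
    then have "card (if fst x = a then B else A) \<le> card {y \<in> A \<union> B. fst y \<noteq> fst x}"
      using \<open>finite (A \<union> B)\<close> by (intro card_mono) auto
    then show ?thesis
      using assms by (simp split: if_splits)
  qed
  then show "is_kTDS V cmp_adj k (A \<union> B)"
    using assms(1,2) by (auto simp: is_kTDS_cmp_adj_iff)
next
  fix T
  assume "T \<subset> A \<union> B"
  then obtain v where "v \<in> A \<union> B" "v \<notin> T" and "T \<subseteq> B \<union> A"
    by blast
  then consider "v \<in> A" | "v \<in> B"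
    by blast
  then show "\<not> is_kTDS V cmp_adj k T"
  proof cases
    case 1
    show ?thesis
      using two_blocks_subset_not_kTDS[of B V A k a b T v] assms \<open>T \<subset> A \<union> B\<close> 1 \<open>v \<notin> T\<close>
      by blast
  next
    case 2
    show ?thesis
      using two_blocks_subset_not_kTDS[of A V B k b a T v] assms \<open>T \<subseteq> B \<union> A\<close> 2 \<open>v \<notin> T\<close>
      by blast
  qed
qed

lemma finite_minimal_kTDS:
  assumes "finite V"
  shows "finite {S. is_minimal_kTDS V E k S}"
proof -
  have "{S. is_minimal_kTDS V E k S} \<subseteq> Pow V"
    by (auto simp: is_minimal_kTDS_def is_kTDS_def)
  then show ?thesis
    using assms by (simp add: finite_subset)
qed

theorem mainTheorem4:
  fixes k p :: nat and n :: "nat \<Rightarrow> nat"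
  assumes "k \<ge> 1" and "p \<ge> 2"
    and "\<forall>i<p. n i \<ge> 1"
    and "card {i. i < p \<and> n i \<ge> k} \<ge> 2"
  shows "upper_ktuple_tdom (cmp_vertices p n) cmp_adj k = 2 * k"
proof -
  let ?V = "cmp_vertices p n" and ?I = "{i. i < p \<and> n i \<ge> k}"
  have "?V = Sigma {..<p} (\<lambda>i. {..<n i})"
    by (auto simp: cmp_vertices_def)
  then have "finite ?V"
    by simp
  have "\<not> card ?I \<le> Suc 0"
    using assms(4) by simp
  then obtain a b where "a \<in> ?I" "b \<in> ?I" "a \<noteq> b"
    using card_le_Suc0_iff_eq[of ?I] by auto
  define A where "A = (\<lambda>j. (a, j)) ` {..<k}"
  define B where "B = (\<lambda>j. (b, j)) ` {..<k}"
  have "A \<subseteq> ?V" "B \<subseteq> ?V"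
    using \<open>a \<in> ?I\<close> \<open>b \<in> ?I\<close> by (auto simp: A_def B_def cmp_vertices_def)
  moreover have "card A = k" "card B = k"
    by (simp_all add: A_def B_def card_image inj_on_def)
  moreover have "\<forall>y\<in>A. fst y = a" "\<forall>y\<in>B. fst y = b"
    by (simp_all add: A_def B_def)
  ultimately have "is_minimal_kTDS ?V cmp_adj k (A \<union> B)"
    using two_blocks_minimal_kTDS \<open>a \<noteq> b\<close> \<open>k \<ge> 1\<close> by blast
  moreover have "card (A \<union> B) = 2 * k"
    using \<open>card A = k\<close> \<open>card B = k\<close> \<open>a \<noteq> b\<close>
    by (subst card_Un_disjoint) (auto simp: A_def B_def)
  ultimately have "2 * k \<in> card ` {S. is_minimal_kTDS ?V cmp_adj k S}"
    by (metis image_eqI mem_Collect_eq)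
  then show ?thesis
    unfolding upper_ktuple_tdom_def
    using finite_minimal_kTDS[OF \<open>finite ?V\<close>] card_minimal_kTDS_le[OF \<open>finite ?V\<close>]
    by (intro Max_eqI) auto
qed

end
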